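(* Let $1\le k\le\infty$ and $\mathbf n=(n_i)$ positive integers such that $\{\ln n_i\}_{1\le i\le k}$ is rationally independent. Then the topological $k$-graph $\Lambda_{\mathbf n}$ satisfies Condition (A).
   Context: $\mathbf n^p=\prod n_i^{p_i}$. $\Lambda_{\mathbf n}=\bigsqcup_{p\in\mathbb N^k}\mathbb T\times\{p\}$ with vertices $\mathbb T\times\{0\}$, $r(z,p)=(z,0)$, $s(z,p)=(z^{\mathbf n^p},0)$, $d(z,p)=p$, composition $(z,p)(z^{\mathbf n^p},q)=(z,p+q)$, topology of a disjoint union of circles. An infinite path in a (topological) $k$-graph $\Lambda$ is a map $\mu$ from $\{(p,q)\in\mathbb N^k\times\mathbb N^k:p\le q\}$ to $\Lambda$ with $d(\mu(p,q))=q-p$ and $\mu(p,q)\mu(q,r)=\mu(p,r)$; its range is $\mu(0,0)$; the shift is $\sigma^m(\mu)(p,q)=\mu(p+m,q+m)$. Condition (A): for every $v\in\Lambda^0$ and every open neighbourhood $V$ of $v$ there exist $v'\in V$ and an infinite path $\mu$ with range $v'$ such that $\sigma^p(\mu)\neq\sigma^q(\mu)$ whenever $p\neq q$. Rationally independent means every finite subfamily is linearly independent over $\mathbb Q$. *)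

theory Defs
  imports "HOL-Analysis.Analysis" "HOL-Library.Extended_Nat"
begin

text \<open>Index set {i. 1 <= i <= k} is rendered 0-based as {i. i < k}, k an extended natural
 (k = \<infinity> allowed). Degrees: N^k = finitely supported functions nat => nat vanishing outside
 the index set, ordered pointwise.\<close>

definition idx :: "enat \<Rightarrow> nat set" where
  "idx k = {i. enat i < k}"

definition degs :: "enat \<Rightarrow> (nat \<Rightarrow> nat) set" where
  "degs k = {p. finite {i. p i \<noteq> 0} \<and> (\<forall>i. i \<notin> idx k \<longrightarrow> p i = 0)}"

definition npow :: "(nat \<Rightarrow> nat) \<Rightarrow> (nat \<Rightarrow> nat) \<Rightarrow> nat" where
  "npow n p = (\<Prod>i\<in>{i. p i \<noteq> 0}. n i ^ p i)"

type_synonym morph = "complex \<times> (nat \<Rightarrow> nat)"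

definition Lam :: "enat \<Rightarrow> morph set" where
  "Lam k = {(z, p). norm z = 1 \<and> p \<in> degs k}"

definition lrng :: "morph \<Rightarrow> morph" where
  "lrng m = (fst m, (\<lambda>_. 0))"

definition lsrc :: "(nat \<Rightarrow> nat) \<Rightarrow> morph \<Rightarrow> morph" where
  "lsrc n m = (fst m ^ npow n (snd m), (\<lambda>_. 0))"

definition ldeg :: "morph \<Rightarrow> (nat \<Rightarrow> nat)" where
  "ldeg m = snd m"

text \<open>Composition (z,p)(z^{n^p},q) = (z,p+q), defined when the source of the first equals the range
 of the second.\<close>

definition lcomp :: "morph \<Rightarrow> morph \<Rightarrow> morph" where
  "lcomp a b = (fst a, (\<lambda>i. snd a i + snd b i))"

text \<open>Infinite paths: maps on {(p,q). p <= q} (represented as total functions, only the values on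
 this domain matter).\<close>

definition inf_path :: "(nat \<Rightarrow> nat) \<Rightarrow> enat \<Rightarrow> ((nat \<Rightarrow> nat) \<Rightarrow> (nat \<Rightarrow> nat) \<Rightarrow> morph) \<Rightarrow> bool" where
  "inf_path n k \<mu> \<longleftrightarrow>
     (\<forall>p\<in>degs k. \<forall>q\<in>degs k. p \<le> q \<longrightarrow>
        \<mu> p q \<in> Lam k \<and> ldeg (\<mu> p q) = (\<lambda>i. q i - p i)) \<and>
     (\<forall>p\<in>degs k. \<forall>q\<in>degs k. \<forall>r\<in>degs k. p \<le> q \<longrightarrow> q \<le> r \<longrightarrow>
        lsrc n (\<mu> p q) = lrng (\<mu> q r) \<and> lcomp (\<mu> p q) (\<mu> q r) = \<mu> p r)"

definition path_range :: "((nat \<Rightarrow> nat) \<Rightarrow> (nat \<Rightarrow> nat) \<Rightarrow> morph) \<Rightarrow> morph" where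
  "path_range \<mu> = \<mu> (\<lambda>_. 0) (\<lambda>_. 0)"

definition shift_eq :: "enat \<Rightarrow> ((nat \<Rightarrow> nat) \<Rightarrow> (nat \<Rightarrow> nat) \<Rightarrow> morph) \<Rightarrow> (nat \<Rightarrow> nat) \<Rightarrow> (nat \<Rightarrow> nat) \<Rightarrow> bool" where
  "shift_eq k \<mu> m m' \<longleftrightarrow> (\<forall>p\<in>degs k. \<forall>q\<in>degs k. p \<le> q \<longrightarrow>
      \<mu> (\<lambda>i. p i + m i) (\<lambda>i. q i + m i) = \<mu> (\<lambda>i. p i + m' i) (\<lambda>i. q i + m' i))"

text \<open>Condition (A); vertices (z,0) with z in the circle, topology of the circle (relative topology
 from the complex plane).\<close>

definition condition_A :: "(nat \<Rightarrow> nat) \<Rightarrow> enat \<Rightarrow> bool" where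
  "condition_A n k \<longleftrightarrow>
    (\<forall>z V. norm z = 1 \<longrightarrow> open V \<longrightarrow> z \<in> V \<longrightarrow>
      (\<exists>z' \<mu>. z' \<in> V \<and> norm z' = 1 \<and> inf_path n k \<mu> \<and> path_range \<mu> = (z', (\<lambda>_. 0)) \<and>
         (\<forall>p\<in>degs k. \<forall>q\<in>degs k. p \<noteq> q \<longrightarrow> \<not> shift_eq k \<mu> p q)))"

definition rat_indep :: "(nat \<Rightarrow> real) \<Rightarrow> nat set \<Rightarrow> bool" where
  "rat_indep x I \<longleftrightarrow> (\<forall>F c. finite F \<longrightarrow> F \<subseteq> I \<longrightarrow>
      (\<Sum>i\<in>F. of_rat (c i) * x i) = 0 \<longrightarrow> (\<forall>i\<in>F. c i = 0))"

end

theory Submission imports Defs begin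

text \<open>Choose the range vertex w near the given one so that w is not a root of unity, and let the
  path be the unique one of each degree starting at w, namely mu(p,q) = (w^(n^p), q - p). Two shifts
  sigma^p mu, sigma^q mu have ranges w^(n^p), w^(n^q); these differ because w is not a root of unity
  and because p \<mapsto> n^p is injective: taking logarithms, n^p = n^q is a rational linear relation
  among the ln n_i.\<close>

lemma inj_power_cis_irrational:
  assumes "s \<notin> \<rat>"
  shows "inj (\<lambda>j::nat. cis (2 * pi * s) ^ j)"
proof (rule linorder_injI)
  fix a b :: nat assume "a < b"
  show "cis (2 * pi * s) ^ a \<noteq> cis (2 * pi * s) ^ b"
  proof
    assume eq: "cis (2 * pi * s) ^ a = cis (2 * pi * s) ^ b"
    have "cis (2 * pi * s) ^ b = cis (2 * pi * s) ^ a * cis (2 * pi * s) ^ (b - a)"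
      using \<open>a < b\<close> by (simp flip: power_add)
    then have "cis (2 * pi * s) ^ (b - a) = 1"
      using eq by simp
    then have "cis (real (b - a) * (2 * pi * s)) = 1"
      by (metis Complex.DeMoivre)
    then obtain m :: int where "real (b - a) * (2 * pi * s) = of_int (2 * m) * pi"
      by (auto simp: cis_conv_exp exp_eq_1)
    then have "(s * real (b - a)) * (2 * pi) = of_int m * (2 * pi)"
      by (simp add: algebra_simps)
    then have "s * real (b - a) = of_int m" by simp
    then have "s = of_int m / real (b - a)"
      using \<open>a < b\<close> by (simp add: field_simps)
    then show False using assms by simp
  qed
qed

lemma exists_non_root_of_unity_near:
  fixes z :: complex
  assumes "norm z = 1" "open V" "z \<in> V"
  obtains w where "w \<in> V" "norm w = 1" "inj (\<lambda>j::nat. w ^ j)"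
proof -
  have "z \<noteq> 0" "sgn z = z" using assms by (auto simp: sgn_div_norm)
  then have z: "cis (Arg z) = z"
    using Arg_correct by metis
  have "open (cis -` V)"
    using assms(2) continuous_on_cis[OF continuous_on_id] by (metis open_vimage)
  moreover have "Arg z \<in> cis -` V" using z assms by simp
  ultimately obtain e where "e > 0" and e: "ball (Arg z) e \<subseteq> cis -` V"
    using open_contains_ball by blast
  define a where "a = Arg z / (2 * pi)"
  have "uncountable {a<..<a + e / (2 * pi)}"
    using \<open>e > 0\<close> by (simp add: uncountable_open_interval)
  then have "\<not> {a<..<a + e / (2 * pi)} \<subseteq> \<rat>"
    using countable_rat countable_subset by blast
  then obtain s where s: "a < s" "s < a + e / (2 * pi)" "s \<notin> \<rat>"
    by (auto simp: subset_eq)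
  have "dist (Arg z) (2 * pi * s) < e"
    using s unfolding a_def dist_real_def by (simp add: field_simps)
  then have "cis (2 * pi * s) \<in> V" using e by auto
  then show ?thesis
    using that inj_power_cis_irrational[OF s(3)] by simp
qed

lemma npow_conv_prod_superset:
  assumes "finite S" "{i. p i \<noteq> 0} \<subseteq> S"
  shows "npow n p = (\<Prod>i\<in>S. n i ^ p i)"
  unfolding npow_def by (rule prod.mono_neutral_left) (use assms in auto)

lemma npow_zero [simp]: "npow n (\<lambda>_. 0) = 1"
  by (simp add: npow_def)

lemma npow_add:
  assumes "finite {i. p i \<noteq> 0}" "finite {i. q i \<noteq> 0}"
  shows "npow n (\<lambda>i. p i + q i) = npow n p * npow n q"
proof -
  let ?S = "{i. p i \<noteq> 0} \<union> {i. q i \<noteq> 0}"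
  have "npow n (\<lambda>i. p i + q i) = (\<Prod>i\<in>?S. n i ^ (p i + q i))"
    by (rule npow_conv_prod_superset) (use assms in auto)
  also have "\<dots> = (\<Prod>i\<in>?S. n i ^ p i) * (\<Prod>i\<in>?S. n i ^ q i)"
    by (simp add: power_add prod.distrib)
  also have "\<dots> = npow n p * npow n q"
    using npow_conv_prod_superset[of ?S p n] npow_conv_prod_superset[of ?S q n] assms by auto
  finally show ?thesis .
qed

lemma ln_npow:
  assumes "finite S" "{i. p i \<noteq> 0} \<subseteq> S" "\<forall>i\<in>S. n i > 0"
  shows "ln (real (npow n p)) = (\<Sum>i\<in>S. real (p i) * ln (real (n i)))"
proof -
  have "real (npow n p) = (\<Prod>i\<in>S. real (n i) ^ p i)"
    using npow_conv_prod_superset[OF assms(1,2)] by simp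
  also have "ln \<dots> = (\<Sum>i\<in>S. ln (real (n i) ^ p i))"
    by (rule ln_prod) (use assms in auto)
  also have "\<dots> = (\<Sum>i\<in>S. real (p i) * ln (real (n i)))"
    by (rule sum.cong) (use assms(3) in \<open>auto simp: ln_realpow\<close>)
  finally show ?thesis .
qed

lemma npow_inj_on_degs:
  assumes pos: "\<forall>i\<in>idx k. n i > 0"
    and indep: "rat_indep (\<lambda>i. ln (real (n i))) (idx k)"
  shows "inj_on (npow n) (degs k)"
proof (rule inj_onI)
  fix p q assume p: "p \<in> degs k" and q: "q \<in> degs k" and eq: "npow n p = npow n q"
  let ?F = "{i. p i \<noteq> 0} \<union> {i. q i \<noteq> 0}"
  have fin: "finite ?F" and F: "?F \<subseteq> idx k"
    using p q by (auto simp: degs_def)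
  then have posF: "\<forall>i\<in>?F. n i > 0" using pos by blast
  define c :: "nat \<Rightarrow> rat" where "c i = of_int (int (p i) - int (q i))" for i
  have "of_rat (c i) * ln (real (n i)) = real (p i) * ln (real (n i)) - real (q i) * ln (real (n i))"
    for i by (simp add: c_def of_rat_diff left_diff_distrib)
  then have "(\<Sum>i\<in>?F. of_rat (c i) * ln (real (n i)))
        = (\<Sum>i\<in>?F. real (p i) * ln (real (n i))) - (\<Sum>i\<in>?F. real (q i) * ln (real (n i)))"
    by (simp add: sum_subtractf)
  also have "\<dots> = ln (real (npow n p)) - ln (real (npow n q))"
    using ln_npow[OF fin _ posF, of p] ln_npow[OF fin _ posF, of q] by auto
  also have "\<dots> = 0" using eq by simp
  finally have c0: "\<forall>i\<in>?F. c i = 0"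
    using indep[unfolded rat_indep_def, rule_format, OF fin F] by blast
  show "p = q"
  proof
    fix i show "p i = q i"
    proof (cases "i \<in> ?F")
      case True
      then have "of_int (int (p i) - int (q i)) = (0::rat)"
        using c0 unfolding c_def by blast
      then show ?thesis by simp
    qed simp
  qed
qed

definition circle_path :: "(nat \<Rightarrow> nat) \<Rightarrow> complex \<Rightarrow> (nat \<Rightarrow> nat) \<Rightarrow> (nat \<Rightarrow> nat) \<Rightarrow> morph" where
  "circle_path n w p q = (w ^ npow n p, (\<lambda>i. q i - p i))"

lemma diff_in_degs: "q \<in> degs k \<Longrightarrow> (\<lambda>i. q i - p i) \<in> degs k"
  unfolding degs_def by (auto elim: finite_subset[rotated])

lemma inf_path_circle_path:
  assumes "norm w = 1"
  shows "inf_path n k (circle_path n w)"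
  unfolding inf_path_def
proof (intro conjI ballI impI)
  fix p q assume "p \<in> degs k" "q \<in> degs k"
  then show "circle_path n w p q \<in> Lam k"
    using assms diff_in_degs by (simp add: circle_path_def Lam_def norm_power)
  show "ldeg (circle_path n w p q) = (\<lambda>i. q i - p i)"
    by (simp add: circle_path_def ldeg_def)
next
  fix p q r assume pqr: "p \<in> degs k" "q \<in> degs k" "r \<in> degs k" "p \<le> q" "q \<le> r"
  then have q: "q = (\<lambda>i. p i + (q i - p i))" by (auto simp: le_fun_def fun_eq_iff)
  have "finite {i. p i \<noteq> 0}" "finite {i. q i - p i \<noteq> 0}"
    using pqr(1) diff_in_degs[OF pqr(2), of p] unfolding degs_def by (simp_all add: not_le)
  then have "npow n q = npow n p * npow n (\<lambda>i. q i - p i)"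
    by (subst q) (rule npow_add)
  then show "lsrc n (circle_path n w p q) = lrng (circle_path n w q r)"
    by (simp add: lsrc_def lrng_def circle_path_def power_mult)
  have "(\<lambda>i. q i - p i + (r i - q i)) = (\<lambda>i. r i - p i)"
  proof
    fix i show "q i - p i + (r i - q i) = r i - p i"
      using pqr(4,5) le_funD[of p q i] le_funD[of q r i] by linarith
  qed
  then show "lcomp (circle_path n w p q) (circle_path n w q r) = circle_path n w p r"
    by (simp add: lcomp_def circle_path_def)
qed

lemma path_range_circle_path: "path_range (circle_path n w) = (w, (\<lambda>_. 0))"
  by (simp add: path_range_def circle_path_def)

lemma shift_eq_circle_path_imp_npow_eq:
  assumes "shift_eq k (circle_path n w) p q"
  shows "w ^ npow n p = w ^ npow n q"
proof -
  have "(\<lambda>_. 0::nat) \<in> degs k" by (simp add: degs_def)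
  then have "circle_path n w p p = circle_path n w q q"
    using assms unfolding shift_eq_def by fastforce
  then show ?thesis by (simp add: circle_path_def)
qed

theorem mainTheorem9:
  fixes k :: enat and n :: "nat \<Rightarrow> nat"
  assumes "k \<ge> 1"
    and "\<forall>i\<in>idx k. n i > 0"
    and "rat_indep (\<lambda>i. ln (real (n i))) (idx k)"
  shows "condition_A n k"
  unfolding condition_A_def
proof (intro allI impI)
  fix z :: complex and V assume "norm z = 1" "open V" "z \<in> V"
  then obtain w where w: "w \<in> V" "norm w = 1" "inj (\<lambda>j::nat. w ^ j)"
    by (rule exists_non_root_of_unity_near)
  have "p = q" if "p \<in> degs k" "q \<in> degs k" "shift_eq k (circle_path n w) p q" for p q
  proof -
    have "npow n p = npow n q"
      using injD[OF w(3) shift_eq_circle_path_imp_npow_eq[OF that(3)]] .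
    then show ?thesis
      by (rule inj_onD[OF npow_inj_on_degs[OF assms(2,3)] _ that(1,2)])
  qed
  then show "\<exists>z' \<mu>. z' \<in> V \<and> norm z' = 1 \<and> inf_path n k \<mu> \<and> path_range \<mu> = (z', (\<lambda>_. 0)) \<and>
      (\<forall>p\<in>degs k. \<forall>q\<in>degs k. p \<noteq> q \<longrightarrow> \<not> shift_eq k \<mu> p q)"
    using w(1,2) inf_path_circle_path[OF w(2)] path_range_circle_path
    by (intro exI[of _ w] exI[of _ "circle_path n w"]) auto
qed

end
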